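(* Let $G$ be a group endowed with a bi-invariant metric $\partial$. The following are equivalent: (i) $(G,\partial)$ has the metric Bergman property; (ii) whenever $d$ is a left-invariant pseudo-metric on $G$ such that for some $\varepsilon>0$ the set $\{g\colon\partial(g,1)<\varepsilon\}$ is $d$-bounded, $d$ is bounded on $G$; (iii) whenever $G$ acts by isometries on a metric space $(X,d)$ in such a way that for every $x\in X$ there exists $\varepsilon>0$ with $\partial(g,1)<\varepsilon\Rightarrow d(x,gx)\le1/\varepsilon$, all $G$-orbits are bounded in $(X,d)$.
   Context: For $W\subseteq G$, $(W)_\varepsilon=\{g\colon\partial(g,W)<\varepsilon\}$ and $(W)_\varepsilon^k$ means $\big((W)_\varepsilon\big)^k$. $(G,\partial)$ has the metric Bergman property if whenever $W_0\subseteq W_1\subseteq\cdots$ is an increasing sequence of subsets of $G$ with $\bigcup_nW_n=G$, then for every $\varepsilon>0$ there exist $n$ and $k$ with $(W_n)_\varepsilon^k=G$. *)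

theory Defs
  imports "HOL-Analysis.Analysis" "HOL-Algebra.Group_Action"
begin

definition bi_invariant_metric :: "('g, 'b) monoid_scheme \<Rightarrow> ('g \<Rightarrow> 'g \<Rightarrow> real) \<Rightarrow> bool" where
  "bi_invariant_metric G dG \<longleftrightarrow> Metric_space (carrier G) dG \<and>
     (\<forall>h\<in>carrier G. \<forall>g\<in>carrier G. \<forall>k\<in>carrier G.
        dG (h \<otimes>\<^bsub>G\<^esub> g) (h \<otimes>\<^bsub>G\<^esub> k) = dG g k \<and> dG (g \<otimes>\<^bsub>G\<^esub> h) (k \<otimes>\<^bsub>G\<^esub> h) = dG g k)"

text \<open>(W)_eps = {g. dist(g,W) < eps}; dist(g,W) < eps iff some w in W has dG g w < eps.\<close>
definition nbhd :: "('g, 'b) monoid_scheme \<Rightarrow> ('g \<Rightarrow> 'g \<Rightarrow> real) \<Rightarrow> 'g set \<Rightarrow> real \<Rightarrow> 'g set" where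
  "nbhd G dG W eps = {g \<in> carrier G. \<exists>w\<in>W. dG g w < eps}"

fun set_pow :: "('g, 'b) monoid_scheme \<Rightarrow> 'g set \<Rightarrow> nat \<Rightarrow> 'g set" where
  "set_pow G A 0 = {\<one>\<^bsub>G\<^esub>}"
| "set_pow G A (Suc k) = A <#>\<^bsub>G\<^esub> set_pow G A k"

definition metric_Bergman :: "('g, 'b) monoid_scheme \<Rightarrow> ('g \<Rightarrow> 'g \<Rightarrow> real) \<Rightarrow> bool" where
  "metric_Bergman G dG \<longleftrightarrow>
     (\<forall>W :: nat \<Rightarrow> 'g set. (\<forall>n. W n \<subseteq> carrier G) \<and> (\<forall>n. W n \<subseteq> W (Suc n)) \<and>
        (\<Union>n. W n) = carrier G \<longrightarrow>
        (\<forall>eps>0. \<exists>n k. set_pow G (nbhd G dG (W n) eps) k = carrier G))"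

definition pseudo_metric_on :: "'a set \<Rightarrow> ('a \<Rightarrow> 'a \<Rightarrow> real) \<Rightarrow> bool" where
  "pseudo_metric_on S d \<longleftrightarrow> (\<forall>x\<in>S. d x x = 0) \<and> (\<forall>x\<in>S. \<forall>y\<in>S. d x y = d y x) \<and>
     (\<forall>x\<in>S. \<forall>y\<in>S. \<forall>z\<in>S. d x z \<le> d x y + d y z)"

definition left_invariant :: "('g, 'b) monoid_scheme \<Rightarrow> ('g \<Rightarrow> 'g \<Rightarrow> real) \<Rightarrow> bool" where
  "left_invariant G d \<longleftrightarrow> (\<forall>h\<in>carrier G. \<forall>g\<in>carrier G. \<forall>k\<in>carrier G.
        d (h \<otimes>\<^bsub>G\<^esub> g) (h \<otimes>\<^bsub>G\<^esub> k) = d g k)"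

definition d_bounded :: "('a \<Rightarrow> 'a \<Rightarrow> real) \<Rightarrow> 'a set \<Rightarrow> bool" where
  "d_bounded d S \<longleftrightarrow> (\<exists>B. \<forall>x\<in>S. \<forall>y\<in>S. d x y \<le> B)"

definition cond_ii :: "('g, 'b) monoid_scheme \<Rightarrow> ('g \<Rightarrow> 'g \<Rightarrow> real) \<Rightarrow> bool" where
  "cond_ii G dG \<longleftrightarrow> (\<forall>d. pseudo_metric_on (carrier G) d \<and> left_invariant G d \<and>
      (\<exists>eps>0. d_bounded d {g \<in> carrier G. dG g \<one>\<^bsub>G\<^esub> < eps})
      \<longrightarrow> d_bounded d (carrier G))"

text \<open>Condition (iii) for metric spaces X whose points live in the type 'x.\<close>
definition cond_iii :: "('g, 'b) monoid_scheme \<Rightarrow> ('g \<Rightarrow> 'g \<Rightarrow> real) \<Rightarrow> 'x itself \<Rightarrow> bool" where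
  "cond_iii G dG _ \<longleftrightarrow>
     (\<forall>(X :: 'x set) (d :: 'x \<Rightarrow> 'x \<Rightarrow> real) (\<phi> :: 'g \<Rightarrow> 'x \<Rightarrow> 'x).
        Metric_space X d \<and> group_action G X \<phi> \<and>
        (\<forall>g\<in>carrier G. \<forall>x\<in>X. \<forall>y\<in>X. d (\<phi> g x) (\<phi> g y) = d x y) \<and>
        (\<forall>x\<in>X. \<exists>eps>0. \<forall>g\<in>carrier G. dG g \<one>\<^bsub>G\<^esub> < eps \<longrightarrow> d x (\<phi> g x) \<le> 1 / eps)
        \<longrightarrow> (\<forall>x\<in>X. Metric_space.mbounded X d (orbit G \<phi> x)))"

end

theory Submission
  imports Defs
begin

text \<open>
  (i) \<Rightarrow> (iii): for an isometric action and a point x, the displacement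
  g \<mapsto> d(x, g x) is subadditive and bounded on some \<partial>-ball around 1. Its sublevel
  sets W_n exhaust G, so by the Bergman property every element is a product of k
  elements each \<epsilon>-close to some W_n, and its displacement is at most k (n + 1/\<epsilon>).

  (iii) \<Rightarrow> (ii): G acts on itself by left translation, isometrically for d + \<partial>.
  By bi-invariance the displacement of a under g is d(1, a^-1 g a) + \<partial>(g, 1), which is
  bounded when g is \<partial>-close to 1; the orbit of 1 is G.

  (ii) \<Rightarrow> (i): symmetrize the W_n to V_n and thicken them to S_n = (V_n)_\<epsilon>. The word length
  len(g) = min {m. g \<in> S_m^m} induces a left-invariant pseudo-metric that is bounded on
  the \<epsilon>-ball, hence bounded by N on G by (ii), and then G = S_N^N.
\<close>

section \<open>Products of subsets of a group\<close>

context group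
begin

lemma mem_set_mult: "x \<in> A <#> B \<longleftrightarrow> (\<exists>a\<in>A. \<exists>b\<in>B. x = a \<otimes> b)"
  by (auto simp: set_mult_def)

lemma set_pow_closed: "A \<subseteq> carrier G \<Longrightarrow> set_pow G A k \<subseteq> carrier G"
  by (induction k) (auto simp: mem_set_mult intro!: m_closed)

lemma one_mem_set_pow: "\<one> \<in> A \<Longrightarrow> \<one> \<in> set_pow G A k"
  by (induction k) (auto simp: mem_set_mult intro!: bexI[of _ \<one>])

lemma set_pow_mono: "A \<subseteq> B \<Longrightarrow> set_pow G A k \<subseteq> set_pow G B k"
  by (induction k) (simp_all add: mono_set_mult)

lemma mem_set_pow_1: "A \<subseteq> carrier G \<Longrightarrow> a \<in> A \<Longrightarrow> a \<in> set_pow G A 1"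
  by (auto simp: mem_set_mult intro!: bexI[of _ a])

lemma mult_mem_set_pow_add:
  assumes "A \<subseteq> carrier G" "x \<in> set_pow G A j" "y \<in> set_pow G A k"
  shows "x \<otimes> y \<in> set_pow G A (j + k)"
  using assms(2)
proof (induction j arbitrary: x)
  case 0
  have "y \<in> carrier G" using set_pow_closed[OF assms(1)] assms(3) by blast
  then show ?case using 0 assms(3) by simp
next
  case (Suc j)
  then obtain a x' where a: "a \<in> A" and x': "x' \<in> set_pow G A j" and x: "x = a \<otimes> x'"
    by (auto simp: mem_set_mult)
  have "x \<otimes> y = a \<otimes> (x' \<otimes> y)"
    using a x' x assms set_pow_closed by (auto intro!: m_assoc)
  then show ?case using Suc.IH[OF x'] a by (auto simp: mem_set_mult)
qed

lemma set_pow_mono_exponent: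
  assumes "A \<subseteq> carrier G" "\<one> \<in> A" "j \<le> k"
  shows "set_pow G A j \<subseteq> set_pow G A k"
proof
  fix x assume x: "x \<in> set_pow G A j"
  have "x \<otimes> \<one> \<in> set_pow G A (j + (k - j))"
    using mult_mem_set_pow_add[OF assms(1) x one_mem_set_pow[OF assms(2)]] .
  then show "x \<in> set_pow G A k"
    using x assms set_pow_closed by (metis le_add_diff_inverse r_one subsetD)
qed

lemma inv_mem_set_pow:
  assumes "A \<subseteq> carrier G" "\<And>a. a \<in> A \<Longrightarrow> inv a \<in> A" "x \<in> set_pow G A k"
  shows "inv x \<in> set_pow G A k"
  using assms(3)
proof (induction k arbitrary: x)
  case 0
  then show ?case by simp
next
  case (Suc k)
  then obtain a x' where a: "a \<in> A" and x': "x' \<in> set_pow G A k" and x: "x = a \<otimes> x'"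
    by (auto simp: mem_set_mult)
  have "inv x' \<otimes> inv a \<in> set_pow G A (k + 1)"
    using mult_mem_set_pow_add[OF assms(1) Suc.IH[OF x'] mem_set_pow_1[OF assms(1) assms(2)[OF a]]]
    .
  moreover have "a \<in> carrier G" "x' \<in> carrier G"
    using a x' assms(1) set_pow_closed by blast+
  then have "inv x = inv x' \<otimes> inv a"
    using x by (simp add: inv_mult_group)
  ultimately show ?case by simp
qed

lemma subadditive_le_on_set_pow:
  assumes "A \<subseteq> carrier G"
    and subadd: "\<And>g h. g \<in> carrier G \<Longrightarrow> h \<in> carrier G \<Longrightarrow> L (g \<otimes> h) \<le> L g + L h"
    and "L \<one> \<le> 0" and "\<And>a. a \<in> A \<Longrightarrow> L a \<le> c"
    and "x \<in> set_pow G A k"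
  shows "L x \<le> real k * c"
  using assms(5)
proof (induction k arbitrary: x)
  case 0
  then show ?case using assms(3) by simp
next
  case (Suc k)
  then obtain a y where a: "a \<in> A" and y: "y \<in> set_pow G A k" and x: "x = a \<otimes> y"
    by (auto simp: mem_set_mult)
  have "L x \<le> L a + L y"
    using subadd a y x assms(1) set_pow_closed by blast
  also have "\<dots> \<le> c + real k * c"
    using assms(4)[OF a] Suc.IH[OF y] by simp
  finally show ?case by (simp add: algebra_simps)
qed

section \<open>Group actions and the translation action on singletons\<close>

text \<open>Condition (iii) only speaks about spaces whose points are sets of group elements, so
  the action of G on itself by left translation is modelled on singletons.\<close>

definition singleton_space :: "'a set set"
  where "singleton_space = (\<lambda>g. {g}) ` carrier G"

definition singleton_translation :: "'a \<Rightarrow> 'a set \<Rightarrow> 'a set"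
  where "singleton_translation g = (\<lambda>A\<in>singleton_space. {g \<otimes> the_elem A})"

lemma singleton_translation_apply:
  "a \<in> carrier G \<Longrightarrow> singleton_translation g {a} = {g \<otimes> a}"
  by (auto simp: singleton_translation_def singleton_space_def)

lemma group_actionI:
  assumes closed: "\<And>g x. g \<in> carrier G \<Longrightarrow> x \<in> E \<Longrightarrow> act g x \<in> E"
    and one: "\<And>x. x \<in> E \<Longrightarrow> act \<one> x = x"
    and compose: "\<And>g h x. g \<in> carrier G \<Longrightarrow> h \<in> carrier G \<Longrightarrow> x \<in> E \<Longrightarrow>
                    act (g \<otimes> h) x = act g (act h x)"
  shows "group_action G E (\<lambda>g. \<lambda>x\<in>E. act g x)"
proof -
  have act_inv: "act (inv g) (act g x) = x" if "g \<in> carrier G" "x \<in> E" for g x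
    using compose[of "inv g" g x] one that by simp
  have bij: "(\<lambda>x\<in>E. act g x) \<in> Bij E" if g: "g \<in> carrier G" for g
    unfolding Bij_def bij_betw_def
  proof (intro CollectI IntI conjI)
    show "inj_on (\<lambda>x\<in>E. act g x) E"
      by (rule inj_onI) (metis act_inv g restrict_apply')
    have "y \<in> (\<lambda>x\<in>E. act g x) ` E" if "y \<in> E" for y
      using act_inv[of "inv g" y] closed[of "inv g" y] g that by (auto intro!: image_eqI)
    then show "(\<lambda>x\<in>E. act g x) ` E = E"
      using closed g by auto
  qed simp
  have "(\<lambda>x\<in>E. act (g \<otimes> h) x) = (\<lambda>x\<in>E. act g x) \<otimes>\<^bsub>BijGroup E\<^esub> (\<lambda>x\<in>E. act h x)"
    if "g \<in> carrier G" "h \<in> carrier G" for g h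
    using that bij closed compose by (auto simp: BijGroup_def compose_def)
  then show ?thesis
    unfolding group_action_def group_hom_def group_hom_axioms_def
    using bij group_BijGroup by (auto simp: hom_def BijGroup_def is_group)
qed

lemma group_action_singleton_translation: "group_action G singleton_space singleton_translation"
  unfolding singleton_translation_def
  by (rule group_actionI) (auto simp: singleton_space_def m_assoc)

lemma orbit_singleton_translation_one: "orbit G singleton_translation {\<one>} = singleton_space"
  unfolding orbit_def singleton_space_def setcompr_eq_image
  by (rule image_cong) (simp_all add: singleton_translation_apply)

end

lemma Metric_space_singletons:
  assumes "Metric_space M m"
  shows "Metric_space ((\<lambda>x. {x}) ` M) (\<lambda>A B. m (the_elem A) (the_elem B))"
proof -
  interpret Metric_space M m by (fact assms)
  show ?thesis
    by unfold_locales (auto simp: commute intro: triangle)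
qed

text \<open>The guard is needed because Metric_space requires nonnegativity and symmetry
  of the distance everywhere, not only on the carrier.\<close>

lemma Metric_space_add_pseudo_metric:
  assumes "pseudo_metric_on M d" and "Metric_space M m"
  shows "Metric_space M (\<lambda>x y. if x \<in> M \<and> y \<in> M then d x y + m x y else 0)"
proof -
  interpret Metric_space M m by (fact assms(2))
  have d_nonneg: "0 \<le> d x y" if "x \<in> M" "y \<in> M" for x y
  proof -
    have "d x x \<le> d x y + d y x" "d y x = d x y" "d x x = 0"
      using assms(1) that unfolding pseudo_metric_on_def by blast+
    then show ?thesis by linarith
  qed
  show ?thesis
  proof unfold_locales
    fix x y z assume xyz: "x \<in> M" "y \<in> M" "z \<in> M"
    have "d x z \<le> d x y + d y z"
      using assms(1) xyz unfolding pseudo_metric_on_def by blast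
    then show "(if x \<in> M \<and> z \<in> M then d x z + m x z else 0)
            \<le> (if x \<in> M \<and> y \<in> M then d x y + m x y else 0)
              + (if y \<in> M \<and> z \<in> M then d y z + m y z else 0)"
      using triangle[OF xyz] xyz by simp
  qed (use assms(1) d_nonneg in \<open>auto simp: pseudo_metric_on_def commute add_nonneg_eq_0_iff\<close>)
qed

section \<open>Word length of a symmetric exhaustion\<close>

locale symmetric_exhaustion = group G for G (structure) +
  fixes S :: "nat \<Rightarrow> 'a set"
  assumes S_closed: "S n \<subseteq> carrier G"
    and S_mono: "m \<le> n \<Longrightarrow> S m \<subseteq> S n"
    and one_mem_S: "\<one> \<in> S n"
    and inv_mem_S: "a \<in> S n \<Longrightarrow> inv a \<in> S n"
    and S_covers: "g \<in> carrier G \<Longrightarrow> \<exists>n. g \<in> S n"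
begin

definition word_length :: "'a \<Rightarrow> nat"
  where "word_length g = (LEAST m. g \<in> set_pow G (S m) m)"

definition word_metric :: "'a \<Rightarrow> 'a \<Rightarrow> real"
  where "word_metric x y = real (word_length (inv x \<otimes> y))"

lemma set_pow_S_mono: "m \<le> n \<Longrightarrow> set_pow G (S m) m \<subseteq> set_pow G (S n) n"
  using set_pow_mono[OF S_mono] set_pow_mono_exponent[OF S_closed one_mem_S] by blast

lemma mem_S_imp_mem_set_pow:
  assumes "g \<in> S n"
  shows "g \<in> set_pow G (S (Suc n)) (Suc n)"
proof -
  have "g \<in> set_pow G (S (Suc n)) 1"
    using assms S_mono[of n "Suc n"] by (intro mem_set_pow_1[OF S_closed]) auto
  then show ?thesis
    using set_pow_mono_exponent[OF S_closed one_mem_S, of 1 "Suc n"] by auto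
qed

lemma word_length_le_iff:
  assumes "g \<in> carrier G"
  shows "word_length g \<le> m \<longleftrightarrow> g \<in> set_pow G (S m) m"
proof
  obtain n where "g \<in> S n" using S_covers[OF assms] ..
  then have "\<exists>m. g \<in> set_pow G (S m) m" using mem_S_imp_mem_set_pow by blast
  then have "g \<in> set_pow G (S (word_length g)) (word_length g)"
    unfolding word_length_def by (rule LeastI_ex)
  then show "g \<in> set_pow G (S m) m" if "word_length g \<le> m"
    using set_pow_S_mono[OF that] by blast
qed (simp add: word_length_def Least_le)

lemma word_length_S: "g \<in> S n \<Longrightarrow> word_length g \<le> Suc n"
  using word_length_le_iff S_closed mem_S_imp_mem_set_pow by blast

lemma word_length_one: "word_length \<one> = 0"
  using word_length_le_iff[of \<one> 0] by simp

lemma word_length_inv: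
  assumes "g \<in> carrier G"
  shows "word_length (inv g) = word_length g"
proof -
  have "word_length (inv x) \<le> word_length x" if "x \<in> carrier G" for x
    using that inv_mem_set_pow[OF S_closed inv_mem_S] word_length_le_iff by blast
  from this[of g] this[of "inv g"] assms show ?thesis by simp
qed

lemma word_length_mult:
  assumes "g \<in> carrier G" "h \<in> carrier G"
  shows "word_length (g \<otimes> h) \<le> word_length g + word_length h"
proof -
  define n where "n = word_length g + word_length h"
  have "g \<in> set_pow G (S n) (word_length g)" "h \<in> set_pow G (S n) (word_length h)"
    using assms word_length_le_iff set_pow_mono[OF S_mono] n_def
    by (metis le_add1 le_add2 order_refl subsetD)+
  then have "g \<otimes> h \<in> set_pow G (S n) n"
    unfolding n_def by (rule mult_mem_set_pow_add[OF S_closed])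
  then show ?thesis using assms word_length_le_iff n_def by simp
qed

lemma pseudo_metric_on_word_metric: "pseudo_metric_on (carrier G) word_metric"
  unfolding pseudo_metric_on_def word_metric_def
proof (intro conjI ballI)
  fix x y z assume x: "x \<in> carrier G" and y: "y \<in> carrier G" and z: "z \<in> carrier G"
  show "real (word_length (inv x \<otimes> x)) = 0" using x word_length_one by simp
  have "inv (inv x \<otimes> y) = inv y \<otimes> x" using x y by (simp add: inv_mult_group)
  then show "real (word_length (inv x \<otimes> y)) = real (word_length (inv y \<otimes> x))"
    using word_length_inv[of "inv x \<otimes> y"] x y by simp
  have "inv x \<otimes> z = (inv x \<otimes> y) \<otimes> (inv y \<otimes> z)"
    using x y z by (simp add: m_assoc) (simp add: m_assoc[symmetric])
  then show "real (word_length (inv x \<otimes> z))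
               \<le> real (word_length (inv x \<otimes> y)) + real (word_length (inv y \<otimes> z))"
    using word_length_mult[of "inv x \<otimes> y" "inv y \<otimes> z"] x y z by simp
qed

lemma left_invariant_word_metric: "left_invariant G word_metric"
  unfolding left_invariant_def word_metric_def
  by (simp add: inv_mult_group m_assoc[symmetric]) (simp add: m_assoc)

lemma d_bounded_word_metric_S: "d_bounded word_metric (S n)"
  unfolding d_bounded_def word_metric_def
proof (intro exI ballI)
  fix x y assume x: "x \<in> S n" and y: "y \<in> S n"
  then have "x \<in> carrier G" "y \<in> carrier G" using S_closed by blast+
  then have "word_length (inv x \<otimes> y) \<le> word_length x + word_length y"
    using word_length_mult[of "inv x" y] word_length_inv[of x] by simp
  then show "real (word_length (inv x \<otimes> y)) \<le> real (2 * Suc n)"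
    using word_length_S[OF x] word_length_S[OF y] by simp
qed

lemma set_pow_eq_carrier_if_d_bounded:
  assumes "d_bounded word_metric (carrier G)"
  shows "\<exists>N. set_pow G (S N) N = carrier G"
proof -
  obtain B where B: "\<And>g. g \<in> carrier G \<Longrightarrow> word_metric \<one> g \<le> B"
    using assms unfolding d_bounded_def by blast
  have "g \<in> set_pow G (S (nat \<lceil>B\<rceil>)) (nat \<lceil>B\<rceil>)" if g: "g \<in> carrier G" for g
  proof -
    have "word_metric \<one> g = real (word_length g)"
      using g by (simp add: word_metric_def)
    then have "real (word_length g) \<le> real (nat \<lceil>B\<rceil>)"
      using B[OF g] real_nat_ceiling_ge[of B] by linarith
    then show ?thesis
      using word_length_le_iff[OF g] by simp
  qed
  then have "carrier G \<subseteq> set_pow G (S (nat \<lceil>B\<rceil>)) (nat \<lceil>B\<rceil>)"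
    by blast
  then show ?thesis using set_pow_closed[OF S_closed] by blast
qed

end

section \<open>Groups with a bi-invariant metric\<close>

lemma exists_pos_le_inverse_ge:
  fixes eps C :: real
  assumes "eps > 0"
  shows "\<exists>e>0. e \<le> eps \<and> C \<le> 1 / e"
proof (intro exI conjI)
  define K where "K = max C 0 + 1 / eps"
  have K: "0 < 1 / eps" "1 / eps \<le> K" "C \<le> K"
    using assms by (auto simp: K_def intro: add_increasing2 add_increasing)
  then have "0 < K" by linarith
  then show "0 < 1 / K" by simp
  show "1 / K \<le> eps"
    using divide_left_mono[OF K(2), of 1] K \<open>0 < K\<close> by simp
  show "C \<le> 1 / (1 / K)" using K by simp
qed

locale bi_invariant_metric_group = group G for G (structure) +
  fixes dG :: "'a \<Rightarrow> 'a \<Rightarrow> real"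
  assumes bi_invariant: "bi_invariant_metric G dG"
begin

sublocale dG: Metric_space "carrier G" dG
  using bi_invariant by (simp add: bi_invariant_metric_def)

lemma dG_left_invariant:
  "h \<in> carrier G \<Longrightarrow> g \<in> carrier G \<Longrightarrow> k \<in> carrier G \<Longrightarrow> dG (h \<otimes> g) (h \<otimes> k) = dG g k"
  using bi_invariant by (simp add: bi_invariant_metric_def)

lemma dG_right_invariant:
  "h \<in> carrier G \<Longrightarrow> g \<in> carrier G \<Longrightarrow> k \<in> carrier G \<Longrightarrow> dG (g \<otimes> h) (k \<otimes> h) = dG g k"
  using bi_invariant by (simp add: bi_invariant_metric_def)

lemma dG_inv_left_mult_one:
  assumes "w \<in> carrier G" "g \<in> carrier G"
  shows "dG (inv w \<otimes> g) \<one> = dG g w"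
proof -
  have "dG (inv w \<otimes> g) \<one> = dG (inv w \<otimes> g) (inv w \<otimes> w)" using assms by simp
  also have "\<dots> = dG g w" using assms by (intro dG_left_invariant) auto
  finally show ?thesis .
qed

lemma dG_inv:
  assumes "g \<in> carrier G" "h \<in> carrier G"
  shows "dG (inv g) (inv h) = dG g h"
proof -
  have "dG (inv g) (inv h) = dG (h \<otimes> inv g) (h \<otimes> inv h)"
    using assms by (intro dG_left_invariant[symmetric]) auto
  also have "\<dots> = dG (h \<otimes> inv g \<otimes> g) (\<one> \<otimes> g)"
    using assms dG_right_invariant[of g "h \<otimes> inv g" \<one>] by simp
  also have "\<dots> = dG h g"
    using assms by (simp add: m_assoc)
  finally show ?thesis by (simp add: dG.commute)
qed

lemma dG_conj_one:
  assumes "a \<in> carrier G" "g \<in> carrier G"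
  shows "dG (inv a \<otimes> g \<otimes> a) \<one> = dG g \<one>"
  using assms dG_left_invariant[of "inv a" "g \<otimes> a" a] dG_right_invariant[of a g \<one>]
  by (simp add: m_assoc)

lemma dG_mult_right_self:
  assumes "a \<in> carrier G" "g \<in> carrier G"
  shows "dG a (g \<otimes> a) = dG g \<one>"
  using dG_right_invariant[of a \<one> g] assms by (simp add: dG.commute)

lemma nbhd_mono: "V \<subseteq> V' \<Longrightarrow> nbhd G dG V eps \<subseteq> nbhd G dG V' eps"
  unfolding nbhd_def by blast

lemma subset_nbhd: "V \<subseteq> carrier G \<Longrightarrow> eps > 0 \<Longrightarrow> V \<subseteq> nbhd G dG V eps"
  unfolding nbhd_def by force

lemma inv_mem_nbhd:
  assumes "V \<subseteq> carrier G" "\<And>v. v \<in> V \<Longrightarrow> inv v \<in> V" "a \<in> nbhd G dG V eps"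
  shows "inv a \<in> nbhd G dG V eps"
proof -
  from assms(3) obtain v where a: "a \<in> carrier G" and v: "v \<in> V" "dG a v < eps"
    unfolding nbhd_def by blast
  have "dG (inv a) (inv v) < eps"
    using dG_inv[of a v] a v assms(1) by auto
  then show ?thesis
    using a assms(2)[OF v(1)] unfolding nbhd_def by blast
qed

lemma metric_Bergman_subadditive_bounded:
  fixes L :: "'a \<Rightarrow> real"
  assumes Bergman: "metric_Bergman G dG"
    and subadd: "\<And>g h. g \<in> carrier G \<Longrightarrow> h \<in> carrier G \<Longrightarrow> L (g \<otimes> h) \<le> L g + L h"
    and one: "L \<one> \<le> 0"
    and local_bound: "eps > 0" "\<And>g. g \<in> carrier G \<Longrightarrow> dG g \<one> < eps \<Longrightarrow> L g \<le> c"
  shows "\<exists>B. \<forall>g\<in>carrier G. L g \<le> B"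
proof -
  define W where "W n = {g \<in> carrier G. L g \<le> real n}" for n
  have "(\<forall>n. W n \<subseteq> carrier G) \<and> (\<forall>n. W n \<subseteq> W (Suc n)) \<and> (\<Union>n. W n) = carrier G"
    unfolding W_def by (auto intro: real_arch_simple)
  then obtain n k where cover: "set_pow G (nbhd G dG (W n) eps) k = carrier G"
    using Bergman \<open>eps > 0\<close> unfolding metric_Bergman_def by (elim allE[of _ W]) blast
  have "L a \<le> real n + c" if "a \<in> nbhd G dG (W n) eps" for a
  proof -
    from that obtain w where a: "a \<in> carrier G" and w: "w \<in> carrier G" "L w \<le> real n"
      and aw: "dG a w < eps"
      unfolding nbhd_def W_def by blast
    have "L a \<le> L w + L (inv w \<otimes> a)"
      using subadd[of w "inv w \<otimes> a"] a w by (simp add: m_assoc[symmetric])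
    moreover have "L (inv w \<otimes> a) \<le> c"
      using local_bound(2)[of "inv w \<otimes> a"] dG_inv_left_mult_one[OF w(1) a] a w aw by simp
    ultimately show ?thesis using w by simp
  qed
  moreover have "nbhd G dG (W n) eps \<subseteq> carrier G"
    unfolding nbhd_def by blast
  ultimately have "L g \<le> real k * (real n + c)" if "g \<in> carrier G" for g
    using subadditive_le_on_set_pow[OF _ subadd one, of _ "real n + c" g k] cover that by blast
  then show ?thesis by blast
qed

lemma metric_Bergman_imp_cond_iii:
  assumes "metric_Bergman G dG"
  shows "cond_iii G dG TYPE('x)"
  unfolding cond_iii_def
proof (intro allI impI ballI)
  fix X :: "'x set" and d \<phi> x
  assume "Metric_space X d \<and> group_action G X \<phi> \<and>
        (\<forall>g\<in>carrier G. \<forall>x\<in>X. \<forall>y\<in>X. d (\<phi> g x) (\<phi> g y) = d x y) \<and>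
        (\<forall>x\<in>X. \<exists>eps>0. \<forall>g\<in>carrier G. dG g \<one> < eps \<longrightarrow> d x (\<phi> g x) \<le> 1 / eps)"
    and x: "x \<in> X"
  then have X: "Metric_space X d" and act: "group_action G X \<phi>"
    and isometric: "\<And>g y z. g \<in> carrier G \<Longrightarrow> y \<in> X \<Longrightarrow> z \<in> X \<Longrightarrow> d (\<phi> g y) (\<phi> g z) = d y z"
    and "\<exists>eps>0. \<forall>g\<in>carrier G. dG g \<one> < eps \<longrightarrow> d x (\<phi> g x) \<le> 1 / eps"
    by auto
  then obtain eps where eps: "eps > 0" "\<And>g. g \<in> carrier G \<Longrightarrow> dG g \<one> < eps \<Longrightarrow> d x (\<phi> g x) \<le> 1 / eps"
    by blast
  interpret X: Metric_space X d by (fact X)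
  interpret act: group_action G X \<phi> by (fact act)
  have image: "\<phi> g x \<in> X" if "g \<in> carrier G" for g
    using act.element_image[OF that x refl] .
  have "d x (\<phi> (g \<otimes> h) x) \<le> d x (\<phi> g x) + d x (\<phi> h x)"
    if "g \<in> carrier G" "h \<in> carrier G" for g h
  proof -
    have "d x (\<phi> (g \<otimes> h) x) \<le> d x (\<phi> g x) + d (\<phi> g x) (\<phi> g (\<phi> h x))"
      using X.triangle[OF x image act.element_image[OF that(1) image refl]] that
        act.composition_rule[OF x that] by simp
    then show ?thesis
      using isometric[OF that(1) x image[OF that(2)]] by simp
  qed
  moreover have "d x (\<phi> \<one> x) \<le> 0"
    using fun_cong[OF act.id_eq_one, of x] x by simp
  ultimately obtain B where B: "\<And>g. g \<in> carrier G \<Longrightarrow> d x (\<phi> g x) \<le> B"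
    using metric_Bergman_subadditive_bounded[where L = "\<lambda>g. d x (\<phi> g x)", OF assms _ _ eps]
    by blast
  have "orbit G \<phi> x \<subseteq> X.mcball x B"
    using B x act.element_image unfolding orbit_def by auto
  then show "X.mbounded (orbit G \<phi> x)"
    unfolding X.mbounded_def by blast
qed

lemma left_invariant_mult_right_self:
  assumes "left_invariant G d" "a \<in> carrier G" "g \<in> carrier G"
  shows "d a (g \<otimes> a) = d \<one> (inv a \<otimes> g \<otimes> a)"
proof -
  have "g \<otimes> a = a \<otimes> (inv a \<otimes> g \<otimes> a)"
    using assms by (simp add: m_assoc[symmetric])
  then show ?thesis
    using assms(1)[unfolded left_invariant_def, rule_format, of a \<one> "inv a \<otimes> g \<otimes> a"] assms(2,3)
    by simp
qed

lemma translation_displacement_bound: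
  assumes d_left: "left_invariant G d" and eps: "eps > 0"
    and B: "\<And>x y. x \<in> carrier G \<Longrightarrow> dG x \<one> < eps \<Longrightarrow> y \<in> carrier G \<Longrightarrow> dG y \<one> < eps \<Longrightarrow> d x y \<le> B"
  obtains e where "e > 0"
    "\<And>a g. a \<in> carrier G \<Longrightarrow> g \<in> carrier G \<Longrightarrow> dG g \<one> < e \<Longrightarrow> d a (g \<otimes> a) + dG a (g \<otimes> a) \<le> 1 / e"
proof -
  obtain e where e: "e > 0" "e \<le> eps" "B + eps \<le> 1 / e"
    using exists_pos_le_inverse_ge[OF eps] by blast
  have "d a (g \<otimes> a) + dG a (g \<otimes> a) \<le> 1 / e"
    if a: "a \<in> carrier G" and g: "g \<in> carrier G" "dG g \<one> < e" for a g
  proof -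
    have "d a (g \<otimes> a) \<le> B"
      using left_invariant_mult_right_self[OF d_left a g(1)] B[of \<one> "inv a \<otimes> g \<otimes> a"]
        dG_conj_one[OF a g(1)] a g e by simp
    moreover have "dG a (g \<otimes> a) < eps"
      using dG_mult_right_self[OF a g(1)] g e by simp
    ultimately show ?thesis using e(3) by linarith
  qed
  with e(1) show thesis by (rule that)
qed

lemma cond_iii_imp_cond_ii:
  assumes iii: "cond_iii G dG TYPE('a set)"
  shows "cond_ii G dG"
  unfolding cond_ii_def
proof (intro allI impI)
  fix d
  assume "pseudo_metric_on (carrier G) d \<and> left_invariant G d \<and>
      (\<exists>eps>0. d_bounded d {g \<in> carrier G. dG g \<one> < eps})"
  then obtain eps B where d: "pseudo_metric_on (carrier G) d" and d_left: "left_invariant G d"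
    and eps: "eps > 0"
    and B: "\<And>x y. x \<in> carrier G \<Longrightarrow> dG x \<one> < eps \<Longrightarrow> y \<in> carrier G \<Longrightarrow> dG y \<one> < eps \<Longrightarrow> d x y \<le> B"
    unfolding d_bounded_def by blast
  obtain e where e: "e > 0"
    "\<And>a g. a \<in> carrier G \<Longrightarrow> g \<in> carrier G \<Longrightarrow> dG g \<one> < e \<Longrightarrow> d a (g \<otimes> a) + dG a (g \<otimes> a) \<le> 1 / e"
    using translation_displacement_bound[OF d_left eps B] by blast
  define m where "m x y = (if x \<in> carrier G \<and> y \<in> carrier G then d x y + dG x y else 0)" for x y
  define D where "D A C = m (the_elem A) (the_elem C)" for A C
  have m: "Metric_space (carrier G) m"
    unfolding m_def by (rule Metric_space_add_pseudo_metric[OF d dG.Metric_space_axioms])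
  have D_metric: "Metric_space singleton_space D"
    unfolding singleton_space_def D_def by (rule Metric_space_singletons[OF m])
  have "\<forall>g\<in>carrier G. \<forall>A\<in>singleton_space. \<forall>C\<in>singleton_space.
          D (singleton_translation g A) (singleton_translation g C) = D A C"
    using d_left
    by (auto simp: singleton_space_def singleton_translation_apply D_def m_def left_invariant_def
        dG_left_invariant)
  moreover have "\<forall>A\<in>singleton_space. \<exists>e>0. \<forall>g\<in>carrier G.
          dG g \<one> < e \<longrightarrow> D A (singleton_translation g A) \<le> 1 / e"
    using e
    by (intro ballI exI[of _ e]) (auto simp: singleton_space_def singleton_translation_apply D_def m_def)
  ultimately have
    "\<forall>A\<in>singleton_space. Metric_space.mbounded singleton_space D (orbit G singleton_translation A)"
    using iii[unfolded cond_iii_def, THEN spec[of _ singleton_space], THEN spec[of _ D],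
        THEN spec[of _ singleton_translation]]
      D_metric group_action_singleton_translation by blast
  moreover have "{\<one>} \<in> singleton_space"
    by (simp add: singleton_space_def)
  ultimately have "Metric_space.mbounded singleton_space D singleton_space"
    using orbit_singleton_translation_one by metis
  then obtain B' where B': "\<And>A C. A \<in> singleton_space \<Longrightarrow> C \<in> singleton_space \<Longrightarrow> D A C \<le> B'"
    using Metric_space.mbounded_alt[OF D_metric] by meson
  have dD: "d g h + dG g h \<le> B'" if "g \<in> carrier G" "h \<in> carrier G" for g h
    using B'[of "{g}" "{h}"] that by (simp add: singleton_space_def D_def m_def)
  have "d g h \<le> B'" if "g \<in> carrier G" "h \<in> carrier G" for g h
    using dD[OF that] dG.nonneg[of g h] by linarith
  then show "d_bounded d (carrier G)"
    unfolding d_bounded_def by blast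
qed

lemma symmetric_exhaustion_nbhd:
  assumes W_closed: "\<And>n. W n \<subseteq> carrier G" and W_mono: "\<And>m n. m \<le> n \<Longrightarrow> W m \<subseteq> W n"
    and W_covers: "\<And>g. g \<in> carrier G \<Longrightarrow> \<exists>n. g \<in> W n"
    and one: "\<one> \<in> W n\<^sub>0" and eps: "eps > 0"
  shows "symmetric_exhaustion G (\<lambda>n. nbhd G dG {g \<in> W (n + n\<^sub>0). inv g \<in> W (n + n\<^sub>0)} eps)"
proof
  define V where "V n = {g \<in> W (n + n\<^sub>0). inv g \<in> W (n + n\<^sub>0)}" for n
  have V_closed: "V n \<subseteq> carrier G" for n
    using W_closed by (auto simp: V_def)
  have V_nbhd: "V n \<subseteq> nbhd G dG (V n) eps" for n
    using subset_nbhd[OF V_closed eps] .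
  show "nbhd G dG (V n) eps \<subseteq> carrier G" for n
    unfolding nbhd_def by blast
  show "nbhd G dG (V m) eps \<subseteq> nbhd G dG (V n) eps" if "m \<le> n" for m n
    using W_mono[of "m + n\<^sub>0" "n + n\<^sub>0"] that by (intro nbhd_mono) (auto simp: V_def)
  show "\<one> \<in> nbhd G dG (V n) eps" for n
  proof -
    have "\<one> \<in> V n" using W_mono[of n\<^sub>0 "n + n\<^sub>0"] one by (auto simp: V_def)
    then show ?thesis using V_nbhd by blast
  qed
  show "inv a \<in> nbhd G dG (V n) eps" if "a \<in> nbhd G dG (V n) eps" for a n
    using that V_closed[of n] by (intro inv_mem_nbhd) (auto simp: V_def)
  show "\<exists>n. g \<in> nbhd G dG (V n) eps" if g: "g \<in> carrier G" for g
  proof -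
    obtain i j where "g \<in> W i" "inv g \<in> W j"
      using W_covers[OF g] W_covers[OF inv_closed[OF g]] by blast
    then have "g \<in> V (i + j)"
      using W_mono[of i "i + j + n\<^sub>0"] W_mono[of j "i + j + n\<^sub>0"] by (auto simp: V_def)
    then show ?thesis using V_nbhd by blast
  qed
qed

lemma cond_ii_imp_metric_Bergman:
  assumes ii: "cond_ii G dG"
  shows "metric_Bergman G dG"
  unfolding metric_Bergman_def
proof (intro allI impI)
  fix W :: "nat \<Rightarrow> 'a set" and eps :: real
  assume "(\<forall>n. W n \<subseteq> carrier G) \<and> (\<forall>n. W n \<subseteq> W (Suc n)) \<and> (\<Union>n. W n) = carrier G"
  then have W_closed: "\<And>n. W n \<subseteq> carrier G" and W_mono: "\<And>m n. m \<le> n \<Longrightarrow> W m \<subseteq> W n"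
    and W_covers: "\<And>g. g \<in> carrier G \<Longrightarrow> \<exists>n. g \<in> W n"
    using lift_Suc_mono_le[of W] by blast+
  assume eps: "eps > 0"
  obtain n\<^sub>0 where one: "\<one> \<in> W n\<^sub>0" using W_covers by blast
  define S where "S n = nbhd G dG {g \<in> W (n + n\<^sub>0). inv g \<in> W (n + n\<^sub>0)} eps" for n
  interpret S: symmetric_exhaustion G S
    unfolding S_def using symmetric_exhaustion_nbhd[OF W_closed W_mono W_covers one eps] .
  have "{g \<in> carrier G. dG g \<one> < eps} \<subseteq> S 0"
    using one by (force simp: S_def nbhd_def)
  then have "d_bounded S.word_metric {g \<in> carrier G. dG g \<one> < eps}"
    using S.d_bounded_word_metric_S[of 0] unfolding d_bounded_def by blast
  then have "d_bounded S.word_metric (carrier G)"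
    using ii[unfolded cond_ii_def, THEN spec[of _ S.word_metric]] eps
      S.pseudo_metric_on_word_metric S.left_invariant_word_metric by blast
  then obtain N where N: "set_pow G (S N) N = carrier G"
    using S.set_pow_eq_carrier_if_d_bounded by blast
  have "S N \<subseteq> nbhd G dG (W (N + n\<^sub>0)) eps"
    unfolding S_def by (rule nbhd_mono) blast
  then have "carrier G \<subseteq> set_pow G (nbhd G dG (W (N + n\<^sub>0)) eps) N"
    using set_pow_mono N by blast
  moreover have "set_pow G (nbhd G dG (W (N + n\<^sub>0)) eps) N \<subseteq> carrier G"
    by (rule set_pow_closed) (auto simp: nbhd_def)
  ultimately show "\<exists>n k. set_pow G (nbhd G dG (W n) eps) k = carrier G"
    by blast
qed

end

theorem proposition4p11:
  fixes G :: "('g, 'b) monoid_scheme" and dG :: "'g \<Rightarrow> 'g \<Rightarrow> real"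
  assumes "group G"
    and "bi_invariant_metric G dG"
  shows "(metric_Bergman G dG \<longleftrightarrow> cond_ii G dG)
       \<and> (metric_Bergman G dG \<longleftrightarrow> cond_iii G dG TYPE('g set))
       \<and> (metric_Bergman G dG \<longrightarrow> cond_iii G dG TYPE('x))"
proof -
  interpret bi_invariant_metric_group G dG
    using assms by (simp add: bi_invariant_metric_group_def bi_invariant_metric_group_axioms_def)
  have "metric_Bergman G dG \<Longrightarrow> cond_iii G dG TYPE('x)"
    and "metric_Bergman G dG \<Longrightarrow> cond_iii G dG TYPE('g set)"
    by (fact metric_Bergman_imp_cond_iii)+
  with cond_iii_imp_cond_ii cond_ii_imp_metric_Bergman show ?thesis
    by blast
qed

end
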